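(* Let $n\geq 2$ be finite. Then $RTA_n=\mathbf{SP}\{\mathfrak{A}_{nk}:k\leq n\}$, i.e. every subdirect product of full transposition set algebras of dimension $n$ is (up to isomorphism) a subalgebra of a direct product of copies of the finitely many algebras $\mathfrak{A}_{nk}$, $k\leq n$, and conversely.
   Context: For a set $U$ and ordinal $\alpha$, the full transposition set algebra of dimension $\alpha$ with base $U$ is $\langle\mathcal{P}({}^\alpha U);\cap,-,S_{ij}\rangle_{i\neq j\in\alpha}$, where $[i,j]$ is the transposition of $\alpha$ swapping $i$ and $j$ and $S_{ij}(X)=\{q\in{}^\alpha U:q\circ[i,j]\in X\}$. $SetTA_\alpha$ is the class of subalgebras of such full algebras, and $RTA_\alpha=\mathbf{SP}\,SetTA_\alpha$ (closure under isomorphic copies of subalgebras and direct products). For $k\leq n$, $\mathfrak{A}_{nk}$ is the full transposition set algebra of dimension $n$ with base $k=\{0,\dots,k-1\}$. *)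

theory Defs
  imports "HOL-Library.FuncSet" "HOL-Combinatorics.Transposition"
begin

text \<open>Algebras of the similarity type of transposition algebras of dimension n:
  a carrier, a binary meet, a complement, and operations S i j (used for i \<noteq> j < n).\<close>
record 'a ta =
  car   :: "'a set"
  meet  :: "'a \<Rightarrow> 'a \<Rightarrow> 'a"
  cmp   :: "'a \<Rightarrow> 'a"
  subst :: "nat \<Rightarrow> nat \<Rightarrow> 'a \<Rightarrow> 'a"

definition is_alg :: "nat \<Rightarrow> 'a ta \<Rightarrow> bool" where
  "is_alg n A \<longleftrightarrow>
     (\<forall>a\<in>car A. \<forall>b\<in>car A. meet A a b \<in> car A) \<and>
     (\<forall>a\<in>car A. cmp A a \<in> car A) \<and>
     (\<forall>i<n. \<forall>j<n. i \<noteq> j \<longrightarrow> (\<forall>a\<in>car A. subst A i j a \<in> car A))"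

definition is_hom :: "nat \<Rightarrow> 'a ta \<Rightarrow> 'b ta \<Rightarrow> ('a \<Rightarrow> 'b) \<Rightarrow> bool" where
  "is_hom n A B h \<longleftrightarrow>
     (\<forall>a\<in>car A. h a \<in> car B) \<and>
     (\<forall>a\<in>car A. \<forall>b\<in>car A. h (meet A a b) = meet B (h a) (h b)) \<and>
     (\<forall>a\<in>car A. h (cmp A a) = cmp B (h a)) \<and>
     (\<forall>i<n. \<forall>j<n. i \<noteq> j \<longrightarrow> (\<forall>a\<in>car A. h (subst A i j a) = subst B i j (h a)))"

definition embeds :: "nat \<Rightarrow> 'a ta \<Rightarrow> 'b ta \<Rightarrow> bool" where
  "embeds n A B \<longleftrightarrow> is_alg n A \<and> (\<exists>h. is_hom n A B h \<and> inj_on h (car A))"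

definition prod_alg :: "'i set \<Rightarrow> ('i \<Rightarrow> 'b ta) \<Rightarrow> ('i \<Rightarrow> 'b) ta" where
  "prod_alg I B =
     \<lparr> car = (\<Pi>\<^sub>E i\<in>I. car (B i)),
       meet = (\<lambda>f g. restrict (\<lambda>i. meet (B i) (f i) (g i)) I),
       cmp = (\<lambda>f. restrict (\<lambda>i. cmp (B i) (f i)) I),
       subst = (\<lambda>k l f. restrict (\<lambda>i. subst (B i) k l (f i)) I) \<rparr>"

text \<open>n-sequences over U, represented as lists of length n with entries in U.\<close>
definition seqs :: "nat \<Rightarrow> 'u set \<Rightarrow> 'u list set" where
  "seqs n U = {q. length q = n \<and> set q \<subseteq> U}"

definition comp_transp :: "'u list \<Rightarrow> nat \<Rightarrow> nat \<Rightarrow> 'u list" where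
  "comp_transp q i j = map (\<lambda>l. q ! transpose i j l) [0..<length q]"

definition set_ta :: "nat \<Rightarrow> 'u set \<Rightarrow> 'u list set set \<Rightarrow> 'u list set ta" where
  "set_ta n U X =
     \<lparr> car = X,
       meet = (\<inter>),
       cmp = (\<lambda>x. seqs n U - x),
       subst = (\<lambda>i j x. {q \<in> seqs n U. comp_transp q i j \<in> x}) \<rparr>"

definition full_ta :: "nat \<Rightarrow> 'u set \<Rightarrow> 'u list set ta" where
  "full_ta n U = set_ta n U (Pow (seqs n U))"

definition A_nk :: "nat \<Rightarrow> nat \<Rightarrow> nat list set ta" where
  "A_nk n k = full_ta n {0..<k}"

text \<open>A \<in> SP SetTA_n, with products indexed by a set of type 'i and bases of type 'u.\<close>
definition in_RTA :: "nat \<Rightarrow> 'a ta \<Rightarrow> 'i itself \<Rightarrow> 'u itself \<Rightarrow> bool" where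
  "in_RTA n A _ _ \<longleftrightarrow>
     (\<exists>(I :: 'i set) (U :: 'i \<Rightarrow> 'u set) (X :: 'i \<Rightarrow> 'u list set set).
        (\<forall>i\<in>I. X i \<subseteq> Pow (seqs n (U i)) \<and> is_alg n (set_ta n (U i) (X i))) \<and>
        embeds n A (prod_alg I (\<lambda>i. set_ta n (U i) (X i))))"

text \<open>A \<in> SP {A_nk : k \<le> n}, with products indexed by a set of type 'i.\<close>
definition in_SP_Ank :: "nat \<Rightarrow> 'a ta \<Rightarrow> 'i itself \<Rightarrow> bool" where
  "in_SP_Ank n A _ \<longleftrightarrow>
     (\<exists>(I :: 'i set) (K :: 'i \<Rightarrow> nat).
        (\<forall>i\<in>I. K i \<le> n) \<and> embeds n A (prod_alg I (\<lambda>i. A_nk n (K i))))"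

end

theory Submission
  imports Defs
begin

text \<open>A sequence \<open>q \<in> \<^sup>nU\<close> takes at most \<open>n\<close> values, and \<open>x \<mapsto> {p \<in> \<^sup>nn. q \<circ> p \<in> x}\<close> is a
  homomorphism from any transposition set algebra with base \<open>U\<close> into \<open>\<AA>\<^sub>n\<^sub>n\<close>: substituting
  along \<open>p\<close> commutes with composing by transpositions. For \<open>p\<close> the identity sequence it
  recovers whether \<open>q \<in> x\<close>, so these homomorphisms separate the points of every subalgebra
  of a product of set algebras, and such an algebra embeds into a power of \<open>\<AA>\<^sub>n\<^sub>n\<close>.
  Conversely each \<open>\<AA>\<^sub>n\<^sub>k\<close> is itself a full set algebra.\<close>

lemma is_hom_comp:
  assumes "is_hom n A B f" "is_hom n B C g"
  shows "is_hom n A C (g \<circ> f)"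
  using assms unfolding is_hom_def by auto

lemma is_hom_proj:
  assumes "i \<in> I"
  shows "is_hom n (prod_alg I B) (B i) (\<lambda>f. f i)"
  using assms unfolding is_hom_def prod_alg_def by auto

lemma is_hom_into_prod:
  assumes "\<forall>j\<in>J. is_hom n A (B j) (h j)"
  shows "is_hom n A (prod_alg J B) (\<lambda>a. restrict (\<lambda>j. h j a) J)"
  using assms unfolding is_hom_def prod_alg_def by (auto intro!: ext)

lemma embeds_power_if_separating_homs:
  assumes "is_alg n A"
    and "\<forall>a\<in>car A. \<forall>b\<in>car A. a \<noteq> b \<longrightarrow> (\<exists>h. is_hom n A B h \<and> h a \<noteq> h b)"
  shows "embeds n A (prod_alg {(a, b). a \<in> car A \<and> b \<in> car A \<and> a \<noteq> b} (\<lambda>_. B))"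
proof -
  define J where "J = {(a, b). a \<in> car A \<and> b \<in> car A \<and> a \<noteq> b}"
  have "\<forall>ab\<in>J. \<exists>h. is_hom n A B h \<and> h (fst ab) \<noteq> h (snd ab)"
    using assms(2) unfolding J_def by auto
  then obtain H where H: "\<And>ab. ab \<in> J \<Longrightarrow> is_hom n A B (H ab) \<and> H ab (fst ab) \<noteq> H ab (snd ab)"
    by metis
  define e where "e = (\<lambda>a. restrict (\<lambda>ab. H ab a) J)"
  have "is_hom n A (prod_alg J (\<lambda>_. B)) e"
    unfolding e_def using H by (intro is_hom_into_prod) blast
  moreover have "inj_on e (car A)"
  proof (rule inj_onI, rule ccontr)
    fix a b assume "a \<in> car A" "b \<in> car A" "e a = e b" "a \<noteq> b"
    then have "(a, b) \<in> J" "H (a, b) a = H (a, b) b"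
      unfolding J_def e_def by (auto dest: fun_cong[where x = "(a, b)"])
    then show False using H by fastforce
  qed
  ultimately show ?thesis
    using assms(1) unfolding embeds_def J_def by blast
qed

lemma transpose_less: "i < n \<Longrightarrow> j < n \<Longrightarrow> l < n \<Longrightarrow> transpose i j l < n"
  by (simp add: transpose_def)

lemma comp_transp_map:
  assumes "i < length p" "j < length p"
  shows "comp_transp (map f p) i j = map f (comp_transp p i j)"
  unfolding comp_transp_def using assms transpose_less[of i "length p" j]
  by (auto intro!: map_cong)

lemma comp_transp_in_seqs:
  assumes "p \<in> seqs n V" "i < n" "j < n"
  shows "comp_transp p i j \<in> seqs n V"
  using assms transpose_less[of i n j] unfolding seqs_def comp_transp_def
  by (auto intro!: nth_mem[THEN subsetD[of "set p" V, rotated]])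

lemma map_nth_in_seqs:
  assumes "q \<in> seqs n U" "p \<in> seqs n {0..<n}"
  shows "map ((!) q) p \<in> seqs n U"
  using assms unfolding seqs_def by (auto intro!: nth_mem[THEN subsetD[of "set q" U, rotated]])

definition seq_pullback :: "'u list \<Rightarrow> 'u list set \<Rightarrow> nat list set" where
  "seq_pullback q x = {p \<in> seqs (length q) {0..<length q}. map ((!) q) p \<in> x}"

lemma is_hom_seq_pullback:
  assumes q: "q \<in> seqs n U"
  shows "is_hom n (set_ta n U X) (A_nk n n) (seq_pullback q)"
proof -
  have len: "length p = n" if "p \<in> seqs n V" for p :: "'v list" and V
    using that by (simp add: seqs_def)
  show ?thesis
    unfolding is_hom_def A_nk_def full_ta_def set_ta_def seq_pullback_def len[OF q]
    using map_nth_in_seqs[OF q] comp_transp_in_seqs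
    by (auto simp: comp_transp_map len)
qed

lemma seq_pullback_separates:
  assumes "x \<subseteq> seqs n U" "y \<subseteq> seqs n U" "x \<noteq> y"
  obtains q where "q \<in> seqs n U" "seq_pullback q x \<noteq> seq_pullback q y"
proof -
  obtain q where q: "q \<in> seqs n U" "q \<in> x \<longleftrightarrow> q \<notin> y"
    using assms by blast
  have "[0..<n] \<in> seqs n {0..<n}" "map ((!) q) [0..<n] = q"
    using q(1) by (auto simp: seqs_def map_nth)
  then have "[0..<n] \<in> seq_pullback q x \<longleftrightarrow> [0..<n] \<notin> seq_pullback q y"
    using q unfolding seq_pullback_def by (auto simp: seqs_def)
  then show ?thesis using that q(1) by blast
qed

lemma set_ta_full_is_alg: "is_alg n (set_ta n U (Pow (seqs n U)))"
  unfolding is_alg_def set_ta_def by auto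

lemma in_SP_Ank_if_in_RTA:
  fixes A :: "'a ta"
  assumes "in_RTA n A TYPE('i) TYPE('u)"
  shows "in_SP_Ank n A TYPE('a \<times> 'a)"
proof -
  obtain I :: "'i set" and U :: "'i \<Rightarrow> 'u set" and X where
    X: "\<forall>i\<in>I. X i \<subseteq> Pow (seqs n (U i))"
    and "embeds n A (prod_alg I (\<lambda>i. set_ta n (U i) (X i)))"
    using assms unfolding in_RTA_def by blast
  then obtain g where alg: "is_alg n A" and inj: "inj_on g (car A)"
    and g: "is_hom n A (prod_alg I (\<lambda>i. set_ta n (U i) (X i))) g"
    unfolding embeds_def by blast
  have "\<exists>h. is_hom n A (A_nk n n) h \<and> h a \<noteq> h b"
    if ab: "a \<in> car A" "b \<in> car A" "a \<noteq> b" for a b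
  proof -
    have gab: "g a \<in> (\<Pi>\<^sub>E i\<in>I. X i)" "g b \<in> (\<Pi>\<^sub>E i\<in>I. X i)"
      using g ab unfolding is_hom_def prod_alg_def set_ta_def by auto
    moreover have "g a \<noteq> g b" using inj ab by (meson inj_onD)
    ultimately obtain i where i: "i \<in> I" "g a i \<noteq> g b i" by (metis PiE_ext)
    moreover have "g a i \<subseteq> seqs n (U i)" "g b i \<subseteq> seqs n (U i)"
      using gab i(1) X by (meson PiE_mem PowD subsetD)+
    ultimately obtain q where q: "q \<in> seqs n (U i)"
      and "seq_pullback q (g a i) \<noteq> seq_pullback q (g b i)"
      by (meson seq_pullback_separates)
    moreover have "is_hom n A (A_nk n n) (seq_pullback q \<circ> (\<lambda>f. f i) \<circ> g)"
      by (intro is_hom_comp[OF g] is_hom_comp[OF is_hom_proj[OF i(1)]]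
          is_hom_seq_pullback[OF q])
    ultimately show ?thesis by auto
  qed
  then have "embeds n A (prod_alg {(a, b). a \<in> car A \<and> b \<in> car A \<and> a \<noteq> b} (\<lambda>_. A_nk n n))"
    using alg by (intro embeds_power_if_separating_homs) auto
  then show ?thesis
    unfolding in_SP_Ank_def by (intro exI[where x = "\<lambda>_. n"] exI conjI) simp_all
qed

lemma in_RTA_if_in_SP_Ank:
  assumes "in_SP_Ank n A TYPE('i)"
  shows "in_RTA n A TYPE('i) TYPE(nat)"
proof -
  obtain I :: "'i set" and K where "embeds n A (prod_alg I (\<lambda>i. A_nk n (K i)))"
    using assms unfolding in_SP_Ank_def by blast
  then show ?thesis
    unfolding in_RTA_def A_nk_def full_ta_def
    using set_ta_full_is_alg
    by (intro exI[of _ I] exI[of _ "\<lambda>i. {0..<K i}"] exI[of _ "\<lambda>i. Pow (seqs n {0..<K i})"]) auto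
qed

theorem theorem3p7:
  fixes n :: nat and A :: "'a ta"
  assumes "n \<ge> 2"
  shows "(in_RTA n A TYPE('i) TYPE('u) \<longrightarrow> in_SP_Ank n A TYPE('a \<times> 'a))
       \<and> (in_SP_Ank n A TYPE('i) \<longrightarrow> in_RTA n A TYPE('i) TYPE(nat))"
  using in_SP_Ank_if_in_RTA in_RTA_if_in_SP_Ank by blast

end
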